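(* Let $n\ge2$, $k\in\{1,\ldots,n\}$, $r\in\mathbb{R}$, and $x^0\in\mathbb{R}^n$ with $x^0_1\ge\cdots\ge x^0_n$ and $\sum_{i=1}^k x^0_i>r$. Beginning from $(k_0,k_1)=(k-1,k)$, every index pair $(k_0,k_1)$ on the trajectory generated by the ESGS procedure satisfies $\mathtt{kkt}_1(k_0,k_1)$, $\mathtt{kkt}_3(k_0,k_1)$ and $\mathtt{kkt}_4(k_0,k_1)$.
   Context: Conventions: $x^0_0:=+\infty$, $x^0_{n+1}:=-\infty$. For $k_0\in\{0,\ldots,k-1\}$ and $k_1\in\{k,\ldots,n\}$ define $S_\alpha=\sum_{i=1}^{k_0}x^0_i-r$, $S_\beta=\sum_{i=k_0+1}^{k_1}x^0_i$, $\rho=k_0(k_1-k_0)+(k-k_0)^2$, $\theta(k_0,k_1)=(k_0S_\beta-(k-k_0)S_\alpha)/\rho$, $\lambda(k_0,k_1)=((k-k_0)S_\beta+(k_1-k_0)S_\alpha)/\rho$. KKT indicators: $\mathtt{kkt}_1$: $\lambda>0$; $\mathtt{kkt}_2$: $x^0_{k_0}>\theta+\lambda$; $\mathtt{kkt}_3$: $\theta+\lambda\ge x^0_{k_0+1}$; $\mathtt{kkt}_4$: $x^0_{k_1}\ge\theta$; $\mathtt{kkt}_5$: $\theta>x^0_{k_1+1}$ (all evaluated at $(k_0,k_1)$). ESGS trajectory: start at $(k_0,k_1)=(k-1,k)$ and repeat: if $\mathtt{kkt}_2\wedge\mathtt{kkt}_5$ holds, stop; else if $\mathtt{kkt}_2$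 holds, set $k_1\gets k_1+1$; else set $k_0\gets k_0-1$. *)

theory Defs
  imports Complex_Main "HOL-Library.Extended_Real"
begin

(* x0 is given as a function on indices 1..n; the conventions
   x0_0 = +infinity and x0_(n+1) = -infinity are realised in ereal. *)
definition xe :: "nat \<Rightarrow> (nat \<Rightarrow> real) \<Rightarrow> nat \<Rightarrow> ereal" where
  "xe n x i = (if i = 0 then \<infinity> else if i = n + 1 then -\<infinity> else ereal (x i))"

definition S_alpha :: "(nat \<Rightarrow> real) \<Rightarrow> real \<Rightarrow> nat \<Rightarrow> real" where
  "S_alpha x r k0 = (\<Sum>i=1..k0. x i) - r"

definition S_beta :: "(nat \<Rightarrow> real) \<Rightarrow> nat \<Rightarrow> nat \<Rightarrow> real" where
  "S_beta x k0 k1 = (\<Sum>i=k0+1..k1. x i)"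

definition rho :: "nat \<Rightarrow> nat \<Rightarrow> nat \<Rightarrow> real" where
  "rho k k0 k1 = real k0 * (real k1 - real k0) + (real k - real k0)^2"

definition theta :: "(nat \<Rightarrow> real) \<Rightarrow> real \<Rightarrow> nat \<Rightarrow> nat \<Rightarrow> nat \<Rightarrow> real" where
  "theta x r k k0 k1 =
     (real k0 * S_beta x k0 k1 - (real k - real k0) * S_alpha x r k0) / rho k k0 k1"

definition lam :: "(nat \<Rightarrow> real) \<Rightarrow> real \<Rightarrow> nat \<Rightarrow> nat \<Rightarrow> nat \<Rightarrow> real" where
  "lam x r k k0 k1 =
     ((real k - real k0) * S_beta x k0 k1 + (real k1 - real k0) * S_alpha x r k0) / rho k k0 k1"

definition kkt1 :: "(nat \<Rightarrow> real) \<Rightarrow> real \<Rightarrow> nat \<Rightarrow> nat \<Rightarrow> nat \<Rightarrow> bool" where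
  "kkt1 x r k k0 k1 \<longleftrightarrow> lam x r k k0 k1 > 0"

definition kkt2 :: "nat \<Rightarrow> (nat \<Rightarrow> real) \<Rightarrow> real \<Rightarrow> nat \<Rightarrow> nat \<Rightarrow> nat \<Rightarrow> bool" where
  "kkt2 n x r k k0 k1 \<longleftrightarrow> xe n x k0 > ereal (theta x r k k0 k1 + lam x r k k0 k1)"

definition kkt3 :: "nat \<Rightarrow> (nat \<Rightarrow> real) \<Rightarrow> real \<Rightarrow> nat \<Rightarrow> nat \<Rightarrow> nat \<Rightarrow> bool" where
  "kkt3 n x r k k0 k1 \<longleftrightarrow> ereal (theta x r k k0 k1 + lam x r k k0 k1) \<ge> xe n x (k0 + 1)"

definition kkt4 :: "nat \<Rightarrow> (nat \<Rightarrow> real) \<Rightarrow> real \<Rightarrow> nat \<Rightarrow> nat \<Rightarrow> nat \<Rightarrow> bool" where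
  "kkt4 n x r k k0 k1 \<longleftrightarrow> xe n x k1 \<ge> ereal (theta x r k k0 k1)"

definition kkt5 :: "nat \<Rightarrow> (nat \<Rightarrow> real) \<Rightarrow> real \<Rightarrow> nat \<Rightarrow> nat \<Rightarrow> nat \<Rightarrow> bool" where
  "kkt5 n x r k k0 k1 \<longleftrightarrow> ereal (theta x r k k0 k1) > xe n x (k1 + 1)"

inductive esgs_traj :: "nat \<Rightarrow> (nat \<Rightarrow> real) \<Rightarrow> real \<Rightarrow> nat \<Rightarrow> nat \<times> nat \<Rightarrow> bool"
  for n x r k where
  start: "esgs_traj n x r k (k - 1, k)"
| step_k1: "esgs_traj n x r k (k0, k1) \<Longrightarrow> \<not> (kkt2 n x r k k0 k1 \<and> kkt5 n x r k k0 k1) \<Longrightarrow>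
            kkt2 n x r k k0 k1 \<Longrightarrow> esgs_traj n x r k (k0, k1 + 1)"
| step_k0: "esgs_traj n x r k (k0, k1) \<Longrightarrow> \<not> (kkt2 n x r k k0 k1 \<and> kkt5 n x r k k0 k1) \<Longrightarrow>
            \<not> kkt2 n x r k k0 k1 \<Longrightarrow> esgs_traj n x r k (k0 - 1, k1)"

end

theory Submission
  imports Defs
begin

(* \<theta>(k0,k1) and \<lambda>(k0,k1) are the unique solution of the 2x2 system
     S_\<beta> = (k1 - k0) \<theta> + (k - k0) \<lambda>,   S_\<alpha> = k0 \<lambda> - (k - k0) \<theta>
   with determinant \<rho>.  Each ESGS move adds one term to S_\<beta> (and, for a k0-move,
   removes it from S_\<alpha>); solving the new system shows that \<theta> and \<lambda> move along a
   fixed direction by a multiple q of the violated KKT residual.  The failing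
   test that triggered the move says q \<ge> 0, so \<lambda> never decreases, and the
   new residuals equal \<rho> q \<ge> 0 for the old determinant \<rho>, which gives back
   kkt3 and kkt4. *)

lemma rho_pos: "k0 < k \<Longrightarrow> k0 \<le> k1 \<Longrightarrow> 0 < rho k k0 k1"
  unfolding rho_def by (simp add: add_nonneg_pos)

lemma rho_extend_right: "rho k k0 (k1 + 1) = rho k k0 k1 + real k0"
  unfolding rho_def by (simp add: algebra_simps)

lemma rho_extend_left: "1 \<le> k0 \<Longrightarrow> rho k (k0 - 1) k1 = rho k k0 k1 + 2 * real k - real k1"
  unfolding rho_def by (simp add: of_nat_diff algebra_simps power2_eq_square)

lemma S_beta_extend_right: "k0 \<le> k1 \<Longrightarrow> S_beta x k0 (k1 + 1) = S_beta x k0 k1 + x (k1 + 1)"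
  unfolding S_beta_def by simp

lemma S_beta_extend_left: "1 \<le> k0 \<Longrightarrow> k0 \<le> k1 \<Longrightarrow> S_beta x (k0 - 1) k1 = S_beta x k0 k1 + x k0"
  unfolding S_beta_def by (simp add: sum.atLeast_Suc_atMost)

lemma S_alpha_extend_left: "1 \<le> k0 \<Longrightarrow> S_alpha x r (k0 - 1) = S_alpha x r k0 - x k0"
  unfolding S_alpha_def by (cases k0) auto

lemma cramer_2x2:
  fixes a b c d u v t l :: "'a :: field"
  assumes "a * d - b * c \<noteq> 0"
  shows "a * t + b * l = u \<and> c * t + d * l = v \<longleftrightarrow>
         t = (d * u - b * v) / (a * d - b * c) \<and> l = (a * v - c * u) / (a * d - b * c)"
  using assms by (auto simp: field_simps) algebra+

lemma theta_lam_iff: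
  assumes "rho k k0 k1 \<noteq> 0"
  shows "S_beta x k0 k1 = (real k1 - real k0) * t + (real k - real k0) * l \<and>
         S_alpha x r k0 = real k0 * l - (real k - real k0) * t
         \<longleftrightarrow> t = theta x r k k0 k1 \<and> l = lam x r k k0 k1"
proof -
  have det: "(real k1 - real k0) * real k0 - (real k - real k0) * - (real k - real k0) = rho k k0 k1"
    unfolding rho_def by (simp add: algebra_simps power2_eq_square)
  show ?thesis
    using cramer_2x2[of "real k1 - real k0" "real k0" "real k - real k0" "- (real k - real k0)"
        t l "S_beta x k0 k1" "S_alpha x r k0"] assms
    unfolding det theta_def lam_def by (auto simp: algebra_simps)
qed

lemma theta_lam_extend_right:
  assumes "k0 < k" "k0 \<le> k1"
  obtains q where "theta x r k k0 (k1 + 1) = theta x r k k0 k1 + real k0 * q"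
    and "lam x r k k0 (k1 + 1) = lam x r k k0 k1 + (real k - real k0) * q"
    and "x (k1 + 1) - theta x r k k0 k1 = rho k k0 (k1 + 1) * q"
proof -
  let ?th = "theta x r k k0 k1" and ?la = "lam x r k k0 k1" and ?rho' = "rho k k0 (k1 + 1)"
  define q where "q = (x (k1 + 1) - ?th) / ?rho'"
  have \<rho>: "rho k k0 k1 \<noteq> 0" and \<rho>': "?rho' > 0"
    using rho_pos[of k0 k k1] rho_pos[of k0 k "k1 + 1"] assms by auto
  then have q_eq: "x (k1 + 1) - ?th = ?rho' * q"
    unfolding q_def by simp
  then have q: "x (k1 + 1) = ?th + ?rho' * q"
    by simp
  have old: "S_beta x k0 k1 = (real k1 - real k0) * ?th + (real k - real k0) * ?la"
    "S_alpha x r k0 = real k0 * ?la - (real k - real k0) * ?th"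
    using theta_lam_iff[OF \<rho>] by blast+
  have "S_beta x k0 (k1 + 1) = (real k1 - real k0) * ?th + (real k - real k0) * ?la + (?th + ?rho' * q)"
    unfolding S_beta_extend_right[OF assms(2)] old(1) q ..
  also have "\<dots> = (real (k1 + 1) - real k0) * (?th + real k0 * q)
          + (real k - real k0) * (?la + (real k - real k0) * q)"
    unfolding rho_def by (simp add: algebra_simps power2_eq_square)
  finally have "?th + real k0 * q = theta x r k k0 (k1 + 1) \<and>
      ?la + (real k - real k0) * q = lam x r k k0 (k1 + 1)"
    using old(2) \<rho>' by (intro theta_lam_iff[THEN iffD1]) (auto simp: algebra_simps)
  then show thesis
    using that[of q] q_eq by simp
qed

lemma theta_lam_extend_left:
  assumes "1 \<le> k0" "k0 < k" "k \<le> k1"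
  obtains q where "theta x r k (k0 - 1) k1 = theta x r k k0 k1 - real k * q"
    and "lam x r k (k0 - 1) k1 = lam x r k k0 k1 + (real k1 - real k) * q"
    and "theta x r k k0 k1 + lam x r k k0 k1 - x k0 = rho k (k0 - 1) k1 * q"
proof -
  let ?th = "theta x r k k0 k1" and ?la = "lam x r k k0 k1" and ?rho' = "rho k (k0 - 1) k1"
  define q where "q = (?th + ?la - x k0) / ?rho'"
  have \<rho>: "rho k k0 k1 \<noteq> 0" and \<rho>': "?rho' > 0"
    using rho_pos[of k0 k k1] rho_pos[of "k0 - 1" k k1] assms by auto
  then have q_eq: "?th + ?la - x k0 = ?rho' * q"
    unfolding q_def by simp
  then have q: "x k0 = ?th + ?la - ?rho' * q"
    by simp
  have k0: "real (k0 - 1) = real k0 - 1"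
    using assms(1) by simp
  have old: "S_beta x k0 k1 = (real k1 - real k0) * ?th + (real k - real k0) * ?la"
    "S_alpha x r k0 = real k0 * ?la - (real k - real k0) * ?th"
    using theta_lam_iff[OF \<rho>] by blast+
  have "S_beta x (k0 - 1) k1 = S_beta x k0 k1 + x k0"
    using assms by (intro S_beta_extend_left) auto
  also have "\<dots> = (real k1 - real k0) * ?th + (real k - real k0) * ?la + (?th + ?la - ?rho' * q)"
    unfolding old(1) q ..
  also have "\<dots> = (real k1 - real (k0 - 1)) * (?th - real k * q)
          + (real k - real (k0 - 1)) * (?la + (real k1 - real k) * q)"
    unfolding rho_def k0 by (simp add: algebra_simps power2_eq_square)
  finally have new_beta: "S_beta x (k0 - 1) k1 = \<dots>" .
  have "S_alpha x r (k0 - 1) = real k0 * ?la - (real k - real k0) * ?th - (?th + ?la - ?rho' * q)"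
    unfolding S_alpha_extend_left[OF assms(1)] old(2) q ..
  also have "\<dots> = real (k0 - 1) * (?la + (real k1 - real k) * q)
          - (real k - real (k0 - 1)) * (?th - real k * q)"
    unfolding rho_def k0 by (simp add: algebra_simps power2_eq_square)
  finally have "?th - real k * q = theta x r k (k0 - 1) k1 \<and>
      ?la + (real k1 - real k) * q = lam x r k (k0 - 1) k1"
    using new_beta \<rho>' by (intro theta_lam_iff[THEN iffD1]) auto
  then show thesis
    using that[of q] q_eq by simp
qed

lemma theta_lam_start:
  assumes "1 \<le> k"
  shows "lam x r k (k - 1) k = ((\<Sum>i=1..k. x i) - r) / real k"
    and "theta x r k (k - 1) k = x k - lam x r k (k - 1) k"
proof -
  define l where "l = ((\<Sum>i=1..k. x i) - r) / real k"
  have "rho k (k - 1) k \<noteq> 0"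
    using rho_pos[of "k - 1" k k] assms by simp
  moreover have "S_beta x (k - 1) k = (real k - real (k - 1)) * (x k - l) + (real k - real (k - 1)) * l"
    using assms by (simp add: S_beta_def of_nat_diff)
  moreover have "S_alpha x r (k - 1) = real (k - 1) * l - (real k - real (k - 1)) * (x k - l)"
  proof -
    have "(\<Sum>i=1..k. x i) = (\<Sum>i=1..k - 1. x i) + x k"
      using assms by (cases k) auto
    then show ?thesis
      using assms unfolding S_alpha_def l_def by (simp add: of_nat_diff field_simps)
  qed
  ultimately have "x k - l = theta x r k (k - 1) k \<and> l = lam x r k (k - 1) k"
    using theta_lam_iff by blast
  then show "lam x r k (k - 1) k = ((\<Sum>i=1..k. x i) - r) / real k"
    and "theta x r k (k - 1) k = x k - lam x r k (k - 1) k"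
    unfolding l_def by auto
qed

lemma xe_inner: "1 \<le> i \<Longrightarrow> i \<le> n \<Longrightarrow> xe n x i = ereal (x i)"
  unfolding xe_def by simp

lemma kkt2_zero: "kkt2 n x r k 0 k1"
  unfolding kkt2_def xe_def by simp

lemma kkt5_last: "kkt5 n x r k k0 n"
  unfolding kkt5_def xe_def by simp

lemma esgs_traj_bounds:
  assumes "1 \<le> k" "k \<le> n" "esgs_traj n x r k (k0, k1)"
  shows "k0 < k \<and> k \<le> k1 \<and> k1 \<le> n"
  using assms(3)
proof (induction "(k0, k1)" arbitrary: k0 k1 rule: esgs_traj.induct)
  case start
  then show ?case using assms by auto
next
  case (step_k1 k0 k1)
  then have "k1 \<noteq> n"
    using kkt5_last by metis
  then show ?case using step_k1 by auto
next
  case (step_k0 k0 k1)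
  then have "k0 \<noteq> 0"
    using kkt2_zero by metis
  then show ?case using step_k0 by auto
qed

definition kkt134 :: "(nat \<Rightarrow> real) \<Rightarrow> real \<Rightarrow> nat \<Rightarrow> nat \<Rightarrow> nat \<Rightarrow> bool" where
  "kkt134 x r k k0 k1 \<longleftrightarrow> 0 < lam x r k k0 k1 \<and>
     x (k0 + 1) \<le> theta x r k k0 k1 + lam x r k k0 k1 \<and> theta x r k k0 k1 \<le> x k1"

lemma kkt134_start:
  assumes "1 \<le> k" "(\<Sum>i=1..k. x i) > r"
  shows "kkt134 x r k (k - 1) k"
  using assms theta_lam_start[OF assms(1), of x r] unfolding kkt134_def by simp

lemma kkt134_extend_right:
  assumes "kkt134 x r k k0 k1" "k0 < k" "k0 \<le> k1" "theta x r k k0 k1 \<le> x (k1 + 1)"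
  shows "kkt134 x r k k0 (k1 + 1)"
proof -
  obtain q where th: "theta x r k k0 (k1 + 1) = theta x r k k0 k1 + real k0 * q"
    and la: "lam x r k k0 (k1 + 1) = lam x r k k0 k1 + (real k - real k0) * q"
    and q: "x (k1 + 1) - theta x r k k0 k1 = rho k k0 (k1 + 1) * q"
    using theta_lam_extend_right[OF assms(2,3)] by blast
  have "0 \<le> rho k k0 (k1 + 1) * q"
    using q assms(4) by linarith
  moreover have "rho k k0 (k1 + 1) > 0"
    using rho_pos assms(2,3) by simp
  ultimately have "q \<ge> 0"
    by (simp add: zero_le_mult_iff)
  then have "0 \<le> real k0 * q" "0 \<le> (real k - real k0) * q" "0 \<le> rho k k0 k1 * q"
    using assms(2,3) rho_pos[of k0 k k1] by simp_all
  moreover have "x (k1 + 1) - theta x r k k0 (k1 + 1) = rho k k0 k1 * q"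
    using th q unfolding rho_extend_right by (simp add: algebra_simps)
  ultimately show ?thesis
    using assms(1) th la unfolding kkt134_def by simp
qed

lemma kkt134_extend_left:
  assumes "kkt134 x r k k0 k1" "1 \<le> k0" "k0 < k" "k \<le> k1"
    and "x k0 \<le> theta x r k k0 k1 + lam x r k k0 k1"
  shows "kkt134 x r k (k0 - 1) k1"
proof -
  obtain q where th: "theta x r k (k0 - 1) k1 = theta x r k k0 k1 - real k * q"
    and la: "lam x r k (k0 - 1) k1 = lam x r k k0 k1 + (real k1 - real k) * q"
    and q: "theta x r k k0 k1 + lam x r k k0 k1 - x k0 = rho k (k0 - 1) k1 * q"
    using theta_lam_extend_left[OF assms(2-4)] by blast
  have "0 \<le> rho k (k0 - 1) k1 * q"
    using q assms(5) by linarith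
  moreover have "rho k (k0 - 1) k1 > 0"
    using rho_pos assms(2-4) by simp
  ultimately have "q \<ge> 0"
    by (simp add: zero_le_mult_iff)
  then have "0 \<le> real k * q" "0 \<le> (real k1 - real k) * q" "0 \<le> rho k k0 k1 * q"
    using assms(3,4) rho_pos[of k0 k k1] by simp_all
  moreover have "theta x r k (k0 - 1) k1 + lam x r k (k0 - 1) k1 - x k0 = rho k k0 k1 * q"
    using th la q unfolding rho_extend_left[OF assms(2)] by (simp add: algebra_simps)
  ultimately show ?thesis
    using assms(1,2) th la unfolding kkt134_def by simp
qed

lemma esgs_traj_kkt134:
  assumes "1 \<le> k" "k \<le> n" "(\<Sum>i=1..k. x i) > r" "esgs_traj n x r k (k0, k1)"
  shows "kkt134 x r k k0 k1"
  using assms(4)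
proof (induction "(k0, k1)" arbitrary: k0 k1 rule: esgs_traj.induct)
  case start
  then show ?case
    using kkt134_start assms(1,3) by blast
next
  case (step_k1 k0 k1)
  then have "\<not> kkt5 n x r k k0 k1"
    by blast
  moreover have "k0 < k" "k0 \<le> k1" "k1 \<le> n"
    using esgs_traj_bounds[OF assms(1,2) step_k1.hyps(1)] by auto
  moreover from calculation have "k1 \<noteq> n"
    using kkt5_last by metis
  ultimately show ?case
    using kkt134_extend_right step_k1.hyps(2) xe_inner[of "k1 + 1" n x]
    unfolding kkt5_def by auto
next
  case (step_k0 k0 k1)
  then have "\<not> kkt2 n x r k k0 k1"
    by blast
  moreover have "k0 < k" "k \<le> k1" "k1 \<le> n"
    using esgs_traj_bounds[OF assms(1,2) step_k0.hyps(1)] by auto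
  moreover from calculation have "k0 \<noteq> 0"
    using kkt2_zero by metis
  ultimately show ?case
    using kkt134_extend_left step_k0.hyps(2) xe_inner[of k0 n x]
    unfolding kkt2_def by auto
qed

theorem lemma3p4:
  fixes n k :: nat and r :: real and x :: "nat \<Rightarrow> real"
  assumes "n \<ge> 2" and "1 \<le> k" and "k \<le> n"
    and "\<And>i j. 1 \<le> i \<Longrightarrow> i \<le> j \<Longrightarrow> j \<le> n \<Longrightarrow> x j \<le> x i"
    and "(\<Sum>i=1..k. x i) > r"
    and "esgs_traj n x r k (k0, k1)"
  shows "kkt1 x r k k0 k1 \<and> kkt3 n x r k k0 k1 \<and> kkt4 n x r k k0 k1"
proof -
  have "k0 < k" "k \<le> k1" "k1 \<le> n"
    using esgs_traj_bounds[OF assms(2,3,6)] by auto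
  then have "xe n x (k0 + 1) = ereal (x (k0 + 1))" "xe n x k1 = ereal (x k1)"
    using assms(2,3) by (auto intro: xe_inner)
  then show ?thesis
    using esgs_traj_kkt134[OF assms(2,3,5,6)]
    unfolding kkt134_def kkt1_def kkt3_def kkt4_def by simp
qed

end
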